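(* Let $d,K\ge1$, $\lambda>0$, $\epsilon>0$, $a^*\in[K]$. For each arm $a\in[K]$ let $X_a\in\mathbb{R}^{m_a\times d}$, $V_a=X_a^\top X_a+\lambda I$, let $\hat\theta_a\in\mathbb{R}^d$ be the (post-attack) parameter estimate and $\alpha_a\in\mathbb{R}$ an exploration parameter independent of the context, and write $\|x\|_{V_a^{-1}}=\sqrt{x^\top V_a^{-1}x}$. Call $x\in\mathbb{R}^d$ $\epsilon$-strongly attacked if $$x^\top\hat\theta_{a^*}+\alpha_{a^*}\|x\|_{V_{a^*}^{-1}}\ \ge\ \epsilon+x^\top\hat\theta_a+\alpha_a\|x\|_{V_a^{-1}}\quad\text{for all }a\neq a^*.$$ If $x$ is $\epsilon$-strongly attacked, then $cx$ is $\epsilon$-strongly attacked for every $c\ge1$.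
   Context: Linear contextual bandit with UCB arm selection; after a reward-poisoning attack the estimates are $\hat\theta_a=V_a^{-1}X_a^\top(y_a+\Delta_a)$ for modified reward vectors $y_a+\Delta_a$. *)

theory Defs
  imports "HOL-Analysis.Analysis"
begin

text \<open>A data matrix X in R^(m x d) is represented by its list of m rows (each in R^d).\<close>

definition outer :: "real^'d \<Rightarrow> real^'d^'d" where
  "outer r = (\<chi> i j. r $ i * r $ j)"

text \<open>X^T X as the sum of outer products of the rows.\<close>
definition gram :: "(real^'d) list \<Rightarrow> real^'d^'d" where
  "gram X = sum_list (map outer X)"

definition design :: "(real^'d) list \<Rightarrow> real \<Rightarrow> real^'d^'d" where
  "design X lam = gram X + lam *\<^sub>R mat 1"

text \<open>X^T z for a vector z in R^m given as a list.\<close>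
definition transp_mult :: "(real^'d) list \<Rightarrow> real list \<Rightarrow> real^'d" where
  "transp_mult X z = (\<Sum>i<length X. (z ! i) *\<^sub>R (X ! i))"

definition vnorm :: "real^'d^'d \<Rightarrow> real^'d \<Rightarrow> real" where
  "vnorm V x = sqrt (x \<bullet> (matrix_inv V *v x))"

definition ucb :: "real^'d \<Rightarrow> real \<Rightarrow> real^'d^'d \<Rightarrow> real^'d \<Rightarrow> real" where
  "ucb th al V x = x \<bullet> th + al * vnorm V x"

definition strongly_attacked ::
  "real \<Rightarrow> nat \<Rightarrow> nat \<Rightarrow> (nat \<Rightarrow> real^'d) \<Rightarrow> (nat \<Rightarrow> real) \<Rightarrow> (nat \<Rightarrow> real^'d^'d) \<Rightarrow> real^'d \<Rightarrow> bool"
  where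
  "strongly_attacked eps K astar th al V x \<longleftrightarrow>
     (\<forall>a\<in>{1..K}. a \<noteq> astar \<longrightarrow>
        ucb (th astar) (al astar) (V astar) x \<ge> eps + ucb (th a) (al a) (V a) x)"

end

theory Submission
  imports Defs
begin

text \<open>Every UCB index is positively homogeneous in the context, so scaling x by c multiplies the
  gap between the target arm's index and any other arm's index by c; a gap of at least
  eps > 0 then stays at least c eps \<ge> eps.\<close>

lemma vnorm_scaleR:
  assumes "c \<ge> 0"
  shows "vnorm V (c *\<^sub>R x) = c * vnorm V x"
proof -
  have "(c *\<^sub>R x) \<bullet> (matrix_inv V *v (c *\<^sub>R x)) = c\<^sup>2 * (x \<bullet> (matrix_inv V *v x))"
    by (simp add: matrix_vector_mult_scaleR power2_eq_square)
  then show ?thesis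
    using assms by (simp add: vnorm_def real_sqrt_mult)
qed

lemma ucb_scaleR:
  assumes "c \<ge> 0"
  shows "ucb th al V (c *\<^sub>R x) = c * ucb th al V x"
  using assms by (simp add: ucb_def vnorm_scaleR algebra_simps)

lemma strongly_attacked_scaleR:
  assumes "strongly_attacked eps K astar th al V x" and "eps \<ge> 0" and "c \<ge> 1"
  shows "strongly_attacked eps K astar th al V (c *\<^sub>R x)"
  unfolding strongly_attacked_def
proof (intro ballI impI)
  fix a assume "a \<in> {1..K}" "a \<noteq> astar"
  let ?gap = "ucb (th astar) (al astar) (V astar) x - ucb (th a) (al a) (V a) x"
  have "eps \<le> ?gap"
    using assms(1) \<open>a \<in> {1..K}\<close> \<open>a \<noteq> astar\<close> unfolding strongly_attacked_def by fastforce
  then have "1 * eps \<le> c * ?gap"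
    using assms(2,3) by (intro mult_mono) auto
  then show "eps + ucb (th a) (al a) (V a) (c *\<^sub>R x) \<le> ucb (th astar) (al astar) (V astar) (c *\<^sub>R x)"
    using assms(3) by (simp add: ucb_scaleR algebra_simps)
qed

theorem proposition2:
  fixes K :: nat and lam eps :: real and astar :: nat
    and X :: "nat \<Rightarrow> (real^'d) list"
    and y \<Delta> :: "nat \<Rightarrow> real list"
    and th :: "nat \<Rightarrow> real^'d"
    and al :: "nat \<Rightarrow> real"
    and x :: "real^'d" and c :: real
  assumes "K \<ge> 1" and "lam > 0" and "eps > 0" and "astar \<in> {1..K}"
    and "\<forall>a\<in>{1..K}. length (y a) = length (X a) \<and> length (\<Delta> a) = length (X a)"
    and "\<forall>a\<in>{1..K}. th a = matrix_inv (design (X a) lam)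
                          *v transp_mult (X a) (map2 (+) (y a) (\<Delta> a))"
    and "strongly_attacked eps K astar th al (\<lambda>a. design (X a) lam) x"
    and "c \<ge> 1"
  shows "strongly_attacked eps K astar th al (\<lambda>a. design (X a) lam) (c *\<^sub>R x)"
  using assms(3,7,8) by (intro strongly_attacked_scaleR) auto

end
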